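(* Let $q=2^r>2$ and $n\ge 1$. Then $$\beta_q^{(n)}(x_1,\dots,x_n)=\sum_{1\le i_1,\dots,i_n\le 2^r-2}x_1^{i_1}x_2^{i_2}\cdots x_n^{i_n}\;+\;x_1+\cdots+x_n$$ is a local permutation polynomial in $\mathbb{F}_q[x_1,\dots,x_n]$ of degree $n(2^r-2)$.
   Context: $\mathbb{F}_q$ is the finite field with $q$ elements. A polynomial $f\in\mathbb{F}_q[x_1,\dots,x_n]$ is a local permutation polynomial (LPP) if, for each $i\in\{1,\dots,n\}$ and each choice of $(a_1,\dots,a_{i-1},a_{i+1},\dots,a_n)\in\mathbb{F}_q^{n-1}$, the univariate polynomial $f(a_1,\dots,a_{i-1},x_i,a_{i+1},\dots,a_n)$ induces a bijection of $\mathbb{F}_q$. Degree means total degree. *)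

theory Defs
  imports Main "HOL-Library.Poly_Mapping" "HOL-Library.FuncSet"
begin

text \<open>Multivariate polynomials over a commutative ring 'a in variables x_0, x_1, ...
  (indexed by nat): a monomial is a finitely supported exponent vector
  nat =>0 nat, a polynomial is a finitely supported map from monomials to
  coefficients (the standard representation of MPoly).\<close>

type_synonym 'a mpoly = "(nat \<Rightarrow>\<^sub>0 nat) \<Rightarrow>\<^sub>0 'a"

definition mpoly_eval :: "'a::comm_ring_1 mpoly \<Rightarrow> (nat \<Rightarrow> 'a) \<Rightarrow> 'a" where
  "mpoly_eval p a =
     (\<Sum>m\<in>Poly_Mapping.keys p. Poly_Mapping.lookup p m * (\<Prod>i\<in>Poly_Mapping.keys m. a i ^ Poly_Mapping.lookup m i))"

definition mon_degree :: "(nat \<Rightarrow>\<^sub>0 nat) \<Rightarrow> nat" where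
  "mon_degree m = (\<Sum>i\<in>Poly_Mapping.keys m. Poly_Mapping.lookup m i)"

definition total_degree :: "'a::zero mpoly \<Rightarrow> nat" where
  "total_degree p = Max (insert 0 (mon_degree ` Poly_Mapping.keys p))"

definition in_vars :: "nat \<Rightarrow> 'a::zero mpoly \<Rightarrow> bool" where
  "in_vars n p \<longleftrightarrow> (\<forall>m\<in>Poly_Mapping.keys p. Poly_Mapping.keys m \<subseteq> {..<n})"

definition is_LPP :: "nat \<Rightarrow> 'a::{finite,field} mpoly \<Rightarrow> bool" where
  "is_LPP n f \<longleftrightarrow> in_vars n f \<and>
     (\<forall>i<n. \<forall>a::nat \<Rightarrow> 'a. bij (\<lambda>x. mpoly_eval f (a(i := x))))"

text \<open>The monomial x_0^{e 0} ... x_{n-1}^{e (n-1)}, and the polynomial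
  beta_q^{(n)} = sum over 1 <= i_1..i_n <= q-2 of x^i  +  x_1 + ... + x_n
  (variables shifted to indices 0..n-1).\<close>

definition expvec :: "nat \<Rightarrow> (nat \<Rightarrow> nat) \<Rightarrow> (nat \<Rightarrow>\<^sub>0 nat)" where
  "expvec n e = (\<Sum>j<n. Poly_Mapping.single j (e j))"

definition beta :: "nat \<Rightarrow> nat \<Rightarrow> 'a::comm_ring_1 mpoly" where
  "beta q n =
     (\<Sum>e\<in>{..<n} \<rightarrow>\<^sub>E {1..q-2}. Poly_Mapping.single (expvec n e) 1)
     + (\<Sum>i<n. Poly_Mapping.single (Poly_Mapping.single i 1) 1)"

end

theory Submission
  imports Defs "HOL-Number_Theory.Residues"
begin

text \<open>Write \<open>s(x) = x + x\<^sup>2 + \<dots> + x\<^sup>q\<^sup>-\<^sup>2\<close>, so that \<open>\<beta>(a) = s(a\<^sub>1) \<cdots> s(a\<^sub>n) + a\<^sub>1 + \<dots> + a\<^sub>n\<close>.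
  Since \<open>(x - 1)(1 + s(x)) = x\<^sup>q\<^sup>-\<^sup>1 - 1 = 0\<close> for \<open>x \<noteq> 0\<close>, in a field with \<open>q = 2\<^sup>r\<close> elements
  \<open>s\<close> vanishes on \<open>{0, 1}\<close> and is \<open>1\<close> elsewhere. Freezing all variables but \<open>x\<^sub>i\<close> therefore
  leaves either \<open>x \<mapsto> x + D\<close> or \<open>x \<mapsto> s(x) + x + D\<close>; the latter is a translate of the
  involution fixing \<open>0\<close> and \<open>1\<close> and sending every other \<open>x\<close> to \<open>x + 1\<close>. The degree is
  attained by the unique monomial \<open>x\<^sub>1\<^sup>q\<^sup>-\<^sup>2 \<cdots> x\<^sub>n\<^sup>q\<^sup>-\<^sup>2\<close>.\<close>

definition mon_eval :: "(nat \<Rightarrow>\<^sub>0 nat) \<Rightarrow> (nat \<Rightarrow> 'a::comm_ring_1) \<Rightarrow> 'a" where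
  "mon_eval m a = (\<Prod>i\<in>Poly_Mapping.keys m. a i ^ Poly_Mapping.lookup m i)"

lemma mon_eval_superset:
  assumes "finite K" "Poly_Mapping.keys m \<subseteq> K"
  shows "mon_eval m a = (\<Prod>i\<in>K. a i ^ Poly_Mapping.lookup m i)"
  unfolding mon_eval_def
  by (rule prod.mono_neutral_left) (use assms in \<open>auto simp: in_keys_iff\<close>)

lemma mon_eval_single_1: "mon_eval (Poly_Mapping.single i 1) a = a i"
  by (subst mon_eval_superset[of "{i}"]) auto

lemma mpoly_eval_superset:
  assumes "finite K" "Poly_Mapping.keys p \<subseteq> K"
  shows "mpoly_eval p a = (\<Sum>m\<in>K. Poly_Mapping.lookup p m * mon_eval m a)"
  unfolding mpoly_eval_def mon_eval_def[symmetric]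
  by (rule sum.mono_neutral_left) (use assms in \<open>auto simp: in_keys_iff\<close>)

lemma mpoly_eval_add: "mpoly_eval (p + q) a = mpoly_eval p a + mpoly_eval q a"
proof -
  let ?K = "Poly_Mapping.keys p \<union> Poly_Mapping.keys q"
  have "mpoly_eval (p + q) a = (\<Sum>m\<in>?K. Poly_Mapping.lookup (p + q) m * mon_eval m a)"
    by (rule mpoly_eval_superset) (auto dest: keys_add[THEN subsetD])
  also have "\<dots> = (\<Sum>m\<in>?K. Poly_Mapping.lookup p m * mon_eval m a)
                + (\<Sum>m\<in>?K. Poly_Mapping.lookup q m * mon_eval m a)"
    by (simp add: lookup_add distrib_right sum.distrib)
  also have "\<dots> = mpoly_eval p a + mpoly_eval q a"
    by (subst (1 2) mpoly_eval_superset[of ?K]) auto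
  finally show ?thesis .
qed

lemma mpoly_eval_sum: "mpoly_eval (\<Sum>x\<in>X. f x) a = (\<Sum>x\<in>X. mpoly_eval (f x) a)"
  by (induction X rule: infinite_finite_induct) (simp_all add: mpoly_eval_add mpoly_eval_def[of 0])

lemma mpoly_eval_single: "mpoly_eval (Poly_Mapping.single m c) a = c * mon_eval m a"
  by (subst mpoly_eval_superset[of "{m}"]) auto

lemma lookup_expvec: "Poly_Mapping.lookup (expvec n e) j = (if j < n then e j else 0)"
  unfolding expvec_def lookup_sum by (auto simp: lookup_single when_def)

lemma keys_expvec: "Poly_Mapping.keys (expvec n e) \<subseteq> {..<n}"
  by (auto simp: in_keys_iff lookup_expvec split: if_splits)

lemma mon_eval_expvec: "mon_eval (expvec n e) a = (\<Prod>j<n. a j ^ e j)"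
  by (subst mon_eval_superset[of "{..<n}"]) (auto simp: keys_expvec lookup_expvec)

lemma mon_degree_expvec: "mon_degree (expvec n e) = (\<Sum>j<n. e j)"
proof -
  have "mon_degree (expvec n e) = (\<Sum>j<n. Poly_Mapping.lookup (expvec n e) j)"
    unfolding mon_degree_def
    by (rule sum.mono_neutral_left) (auto simp: keys_expvec in_keys_iff)
  then show ?thesis by (simp add: lookup_expvec)
qed

lemma mon_degree_single_1: "mon_degree (Poly_Mapping.single i 1) = 1"
  by (simp add: mon_degree_def)

lemma inj_on_expvec: "inj_on (expvec n) ({..<n} \<rightarrow>\<^sub>E A)"
proof (rule inj_onI)
  fix e e' assume e: "e \<in> {..<n} \<rightarrow>\<^sub>E A" and e': "e' \<in> {..<n} \<rightarrow>\<^sub>E A"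
    and eq: "expvec n e = expvec n e'"
  have "e j = e' j" if "j < n" for j
    using arg_cong[OF eq, of "\<lambda>m. Poly_Mapping.lookup m j"] that by (simp add: lookup_expvec)
  then show "e = e'"
    using e e' by (intro PiE_ext) auto
qed

lemma lookup_sum_single_inj:
  assumes "finite A" "inj_on f A" "y \<in> A"
  shows "Poly_Mapping.lookup (\<Sum>x\<in>A. Poly_Mapping.single (f x) c) (f y) = c"
proof -
  have "Poly_Mapping.lookup (\<Sum>x\<in>A. Poly_Mapping.single (f x) c) (f y) = (\<Sum>x\<in>A. if x = y then c else 0)"
    unfolding lookup_sum using assms(2,3)
    by (intro sum.cong) (auto simp: lookup_single when_def inj_on_eq_iff)
  then show ?thesis using assms(1,3) by simp
qed

lemma total_degree_eqI:
  assumes "\<And>m. m \<in> Poly_Mapping.keys p \<Longrightarrow> mon_degree m \<le> d"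
    and "m \<in> Poly_Mapping.keys p" "mon_degree m = d"
  shows "total_degree p = d"
  unfolding total_degree_def using assms by (intro Max_eqI) auto

lemma of_nat_card_UNIV_eq_0: "of_nat (card (UNIV :: 'a::{finite,ring_1} set)) = (0::'a)"
  by (simp add: of_nat_eq_0_iff_char_dvd CHAR_dvd_CARD)

lemma power_card_UNIV_minus_1:
  fixes x :: "'a::{finite,field}"
  assumes "x \<noteq> 0"
  shows "x ^ (card (UNIV :: 'a set) - 1) = 1"
proof -
  let ?U = "UNIV - {0::'a}"
  have "(\<Prod>y\<in>?U. y) = (\<Prod>y\<in>?U. x * y)"
    by (rule prod.reindex_bij_witness[of _ "\<lambda>y. x * y" "\<lambda>y. y / x"]) (use assms in auto)
  also have "\<dots> = x ^ card ?U * (\<Prod>y\<in>?U. y)"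
    by (simp add: prod.distrib)
  finally have "x ^ card ?U = 1"
    by (metis mult_cancel_right2 prod_zero_iff finite DiffD2 singletonI)
  then show ?thesis
    by (simp add: card_Diff_singleton)
qed

lemma bij_plus_1_off_0_1:
  assumes "(2::'a::ring_1) = 0"
  shows "bij (\<lambda>x::'a. if x = 0 \<or> x = 1 then x else x + 1)"
proof -
  have twice: "x + 1 + 1 = x" for x :: 'a
    using assms by (simp add: add.assoc flip: one_add_one)
  then have "x + 1 = 0 \<longleftrightarrow> x = 1" for x :: 'a
    by (metis add_0)
  then show ?thesis
    by (intro involuntory_imp_bij) (auto simp: twice)
qed

lemma prod_in_0_1:
  "(\<And>x. x \<in> A \<Longrightarrow> f x \<in> {0, 1}) \<Longrightarrow> prod f A \<in> {0::'a::comm_semiring_1, 1}"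
  by (induction A rule: infinite_finite_induct) (auto, blast)

definition beta_factor :: "nat \<Rightarrow> 'a::comm_ring_1 \<Rightarrow> 'a" where
  "beta_factor q x = (\<Sum>i=1..q-2. x ^ i)"

lemma mpoly_eval_beta:
  "mpoly_eval (beta q n) a = (\<Prod>j<n. beta_factor q (a j)) + (\<Sum>j<n. a j)"
proof -
  have "(\<Prod>j<n. beta_factor q (a j)) = (\<Sum>e\<in>{..<n} \<rightarrow>\<^sub>E {1..q-2}. \<Prod>j<n. a j ^ e j)"
    unfolding beta_factor_def by (rule prod_sum_PiE) auto
  then show ?thesis
    unfolding beta_def mpoly_eval_add mpoly_eval_sum mpoly_eval_single mon_eval_expvec
      mon_eval_single_1
    by simp
qed

lemma keys_beta:
  "Poly_Mapping.keys (beta q n :: 'a::comm_ring_1 mpoly) \<subseteq>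
     expvec n ` ({..<n} \<rightarrow>\<^sub>E {1..q-2}) \<union> (\<lambda>i. Poly_Mapping.single i 1) ` {..<n}"
  unfolding beta_def
  by (rule order_trans[OF keys_add Un_mono]; rule order_trans[OF keys_sum]) auto

lemma in_vars_beta: "in_vars n (beta q n :: 'a::comm_ring_1 mpoly)"
  unfolding in_vars_def using keys_beta keys_expvec by fastforce

lemma total_degree_beta:
  assumes "4 \<le> q" "1 \<le> n"
  shows "total_degree (beta q n :: 'a::comm_ring_1 mpoly) = n * (q - 2)"
proof -
  let ?E = "{..<n} \<rightarrow>\<^sub>E {1..q-2}"
  define M where "M = expvec n (restrict (\<lambda>_. q - 2) {..<n})"
  have degree_M: "mon_degree M = n * (q - 2)"
    by (simp add: M_def mon_degree_expvec)
  have degree_ge_2: "2 \<le> n * (q - 2)"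
    using mult_le_mono[of 1 n 2 "q - 2"] assms by simp
  then have "Poly_Mapping.single i 1 \<noteq> M" for i
    using degree_M mon_degree_single_1[of i] by auto
  then have "Poly_Mapping.lookup (\<Sum>i<n. Poly_Mapping.single (Poly_Mapping.single i 1) (1::'a)) M = 0"
    by (simp add: lookup_sum lookup_single when_def)
  moreover have "Poly_Mapping.lookup (\<Sum>e\<in>?E. Poly_Mapping.single (expvec n e) (1::'a)) M = 1"
    unfolding M_def using assms(1) by (intro lookup_sum_single_inj inj_on_expvec) (auto intro: finite_PiE)
  ultimately have "M \<in> Poly_Mapping.keys (beta q n :: 'a mpoly)"
    by (simp add: in_keys_iff beta_def lookup_add)
  moreover have "mon_degree m \<le> n * (q - 2)" if "m \<in> Poly_Mapping.keys (beta q n :: 'a mpoly)" for m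
  proof -
    from keys_beta[THEN subsetD, OF that]
    consider (monomial) e where "e \<in> ?E" "m = expvec n e" | (linear) i where "m = Poly_Mapping.single i 1"
      by blast
    then show ?thesis
    proof cases
      case monomial
      then show ?thesis
        using sum_mono[of "{..<n}" e "\<lambda>_. q - 2"] by (auto simp: mon_degree_expvec PiE_iff)
    next
      case linear
      show ?thesis
        unfolding linear mon_degree_single_1 using degree_ge_2 by linarith
    qed
  qed
  ultimately show ?thesis
    using degree_M by (intro total_degree_eqI)
qed

lemma beta_factor_card_UNIV:
  fixes x :: "'a::{finite,field}"
  shows "beta_factor (card (UNIV :: 'a set)) x = (if x = 0 then 0 else if x = 1 then - 2 else - 1)"
proof -
  let ?q = "card (UNIV :: 'a set)"
  have "2 \<le> ?q"
    using card_mono[of UNIV "{0::'a, 1}"] by simp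
  then have "{..<?q - 1} = insert 0 {1..?q - 2}"
    by auto
  then have geometric: "(\<Sum>i<?q - 1. x ^ i) = 1 + beta_factor ?q x"
    by (simp add: beta_factor_def)
  consider "x = 0" | "x = 1" | "x \<noteq> 0" "x \<noteq> 1"
    by blast
  then show ?thesis
  proof cases
    case 1
    then show ?thesis
      by (auto simp: beta_factor_def intro!: sum.neutral)
  next
    case 2
    have "beta_factor ?q x = of_nat ?q - 2"
      using 2 \<open>2 \<le> ?q\<close> by (simp add: beta_factor_def)
    then show ?thesis
      using 2 by (simp add: of_nat_card_UNIV_eq_0)
  next
    case 3
    have "(x - 1) * (\<Sum>i<?q - 1. x ^ i) = 0"
      using power_card_UNIV_minus_1[OF \<open>x \<noteq> 0\<close>] by (simp flip: power_diff_1_eq)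
    then show ?thesis
      using 3 geometric by (simp add: eq_neg_iff_add_eq_0 add.commute)
  qed
qed

lemma beta_factor_char_2:
  fixes x :: "'a::{finite,field}"
  assumes "(2::'a) = 0"
  shows "beta_factor (card (UNIV :: 'a set)) x = (if x = 0 \<or> x = 1 then 0 else 1)"
proof -
  have "(- 1 :: 'a) = 1"
    using assms minus_unique[of "1::'a" 1] by simp
  then show ?thesis
    using assms by (simp add: beta_factor_card_UNIV)
qed

lemma bij_beta_factor_mult_plus:
  fixes C D :: "'a::{finite,field}"
  assumes "(2::'a) = 0" "C \<in> {0, 1}"
  shows "bij (\<lambda>x. beta_factor (card (UNIV :: 'a set)) x * C + (x + D))"
proof (cases "C = 0")
  case True
  then show ?thesis
    by (simp add: bij_plus_right)
next
  case False
  with assms have "(\<lambda>x. beta_factor (card (UNIV :: 'a set)) x * C + (x + D))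
      = (\<lambda>y. y + D) \<circ> (\<lambda>x. if x = 0 \<or> x = 1 then x else x + 1)"
    by (auto simp: beta_factor_char_2 add.assoc)
  then show ?thesis
    using bij_comp[OF bij_plus_1_off_0_1[OF assms(1)] bij_plus_right] by simp
qed

lemma is_LPP_beta:
  assumes "(2::'a::{finite,field}) = 0"
  shows "is_LPP n (beta (card (UNIV :: 'a set)) n :: 'a mpoly)"
  unfolding is_LPP_def
proof (intro conjI allI impI in_vars_beta)
  fix i :: nat and a :: "nat \<Rightarrow> 'a"
  assume "i < n"
  let ?q = "card (UNIV :: 'a set)"
  define C where "C = (\<Prod>j\<in>{..<n} - {i}. beta_factor ?q (a j))"
  define D where "D = (\<Sum>j\<in>{..<n} - {i}. a j)"
  have "mpoly_eval (beta ?q n) (a(i := x)) = beta_factor ?q x * C + (x + D)" for x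
    unfolding mpoly_eval_beta C_def D_def using \<open>i < n\<close>
    by (simp add: prod.remove[of _ i] sum.remove[of _ i])
  moreover have "C \<in> {0, 1}"
    unfolding C_def using assms by (intro prod_in_0_1) (simp add: beta_factor_char_2)
  ultimately show "bij (\<lambda>x. mpoly_eval (beta ?q n) (a(i := x)))"
    using bij_beta_factor_mult_plus[OF assms] by simp
qed

theorem mainTheorem9:
  fixes r n :: nat
  assumes "card (UNIV :: 'a::{finite,field} set) = 2 ^ r" and "2 ^ r > (2::nat)" and "n \<ge> 1"
  shows "is_LPP n (beta (2 ^ r) n :: 'a mpoly)
         \<and> total_degree (beta (2 ^ r) n :: 'a mpoly) = n * (2 ^ r - 2)"
proof
  have "(2::'a) ^ r = 0"
    using of_nat_card_UNIV_eq_0[where 'a='a] assms(1) by simp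
  then have "(2::'a) = 0"
    by simp
  then have "is_LPP n (beta (card (UNIV :: 'a set)) n :: 'a mpoly)"
    by (rule is_LPP_beta)
  then show "is_LPP n (beta (2 ^ r) n :: 'a mpoly)"
    by (simp only: assms(1))
  have "(2::nat) ^ 1 < 2 ^ r"
    using assms(2) by simp
  then have "(2::nat) ^ 2 \<le> 2 ^ r"
    by (simp only: power_strict_increasing_iff power_increasing_iff)
  then have "4 \<le> (2::nat) ^ r"
    by simp
  then show "total_degree (beta (2 ^ r) n :: 'a mpoly) = n * (2 ^ r - 2)"
    using assms(3) by (rule total_degree_beta)
qed

end
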